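(* Let $V$ be a real inner product space with induced norm $\lVert\cdot\rVert$. Let $a,b,a',b'\in V$ and $\gamma\ge0$ satisfy \[ \max\{\lVert x-y\rVert : x,y\in\{a,b,a',b'\}\}\le\gamma\le 2\lVert a-b\rVert+2\lVert a'-b'\rVert . \] Then, with $m=(a+b)/2$ and $m'=(a'+b')/2$, we have $\lVert m-m'\rVert\le\sqrt{\tfrac{31}{32}}\,\gamma$. *)

theory Defs
  imports "HOL-Analysis.Analysis"
begin

end

theory Submission
  imports Defs
begin

text \<open>Both pairings of the four points write \<open>2 (m - m')\<close> as a sum of two vectors of norm at
  most \<open>\<gamma>\<close>: \<open>(a - a') + (b - b')\<close> and \<open>(a - b') + (b - a')\<close>, whose differences are
  \<open>u - v\<close> and \<open>u + v\<close> for \<open>u = a - b\<close>, \<open>v = a' - b'\<close>. Three applications of the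
  parallelogram law give \<open>8 \<parallel>m - m'\<parallel>\<^sup>2 + 2 \<parallel>u\<parallel>\<^sup>2 + 2 \<parallel>v\<parallel>\<^sup>2 \<le> 8 \<gamma>\<^sup>2\<close>, and the lower bound on \<open>\<gamma>\<close>
  gives \<open>\<gamma>\<^sup>2 \<le> 8 \<parallel>u\<parallel>\<^sup>2 + 8 \<parallel>v\<parallel>\<^sup>2\<close>.\<close>

lemma parallelogram_law:
  fixes x y :: "'a :: real_inner"
  shows "norm (x + y)^2 + norm (x - y)^2 = 2 * norm x^2 + 2 * norm y^2"
  by (simp add: power2_norm_eq_inner inner_add inner_diff inner_commute algebra_simps)

lemma norm_add_sq_plus_norm_diff_sq_le:
  fixes x y :: "'a :: real_inner"
  assumes "norm x \<le> g" "norm y \<le> g"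
  shows "norm (x + y)^2 + norm (x - y)^2 \<le> 4 * g^2"
proof -
  have "norm x^2 \<le> g^2" "norm y^2 \<le> g^2"
    using assms by (auto intro!: power_mono)
  then show ?thesis
    unfolding parallelogram_law by linarith
qed

lemma sum_sq_le_twice_sum_of_sq:
  fixes s t :: real
  shows "(s + t)^2 \<le> 2 * s^2 + 2 * t^2"
  using sum_squares_ge_zero[of "s - t" 0] by (simp add: power2_eq_square algebra_simps)

lemma norm_midpoint_diff_sq_bound:
  fixes a b a' b' :: "'a :: real_inner" and \<gamma> :: real
  assumes "norm (a - a') \<le> \<gamma>" "norm (b - b') \<le> \<gamma>" "norm (a - b') \<le> \<gamma>" "norm (b - a') \<le> \<gamma>"
  shows "8 * norm ((a + b) /\<^sub>R 2 - (a' + b') /\<^sub>R 2)^2 + 2 * norm (a - b)^2 + 2 * norm (a' - b')^2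
           \<le> 8 * \<gamma>^2"
proof -
  define d where "d = (a + b) /\<^sub>R 2 - (a' + b') /\<^sub>R 2"
  define u where "u = a - b"
  define v where "v = a' - b'"
  have "norm ((a - a') + (b - b'))^2 + norm ((a - a') - (b - b'))^2 \<le> 4 * \<gamma>^2"
    using assms by (intro norm_add_sq_plus_norm_diff_sq_le)
  moreover have "(a - a') + (b - b') = 2 *\<^sub>R d" "(a - a') - (b - b') = u - v"
    unfolding d_def u_def v_def by (simp_all add: algebra_simps)
  moreover have "norm ((a - b') + (b - a'))^2 + norm ((a - b') - (b - a'))^2 \<le> 4 * \<gamma>^2"
    using assms by (intro norm_add_sq_plus_norm_diff_sq_le)
  moreover have "(a - b') + (b - a') = 2 *\<^sub>R d" "(a - b') - (b - a') = u + v"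
    unfolding d_def u_def v_def by (simp_all add: algebra_simps)
  ultimately have "8 * norm d^2 + (norm (u + v)^2 + norm (u - v)^2) \<le> 8 * \<gamma>^2"
    by (simp add: power_mult_distrib)
  then show ?thesis
    unfolding parallelogram_law d_def u_def v_def by simp
qed

theorem lemma3:
  fixes a b a' b' :: "'a :: real_inner" and \<gamma> :: real
  assumes "\<gamma> \<ge> 0"
    and "\<forall>x\<in>{a, b, a', b'}. \<forall>y\<in>{a, b, a', b'}. norm (x - y) \<le> \<gamma>"
    and "\<gamma> \<le> 2 * norm (a - b) + 2 * norm (a' - b')"
  shows "norm ((a + b) /\<^sub>R 2 - (a' + b') /\<^sub>R 2) \<le> sqrt (31 / 32) * \<gamma>"
proof -
  define N where "N = norm ((a + b) /\<^sub>R 2 - (a' + b') /\<^sub>R 2)"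
  have "8 * N^2 + 2 * norm (a - b)^2 + 2 * norm (a' - b')^2 \<le> 8 * \<gamma>^2"
    unfolding N_def using assms(2) by (intro norm_midpoint_diff_sq_bound) auto
  moreover have "\<gamma>^2 \<le> 8 * norm (a - b)^2 + 8 * norm (a' - b')^2"
  proof -
    have "\<gamma>^2 \<le> (2 * norm (a - b) + 2 * norm (a' - b'))^2"
      using assms(1,3) by (intro power_mono)
    also have "\<dots> \<le> 8 * norm (a - b)^2 + 8 * norm (a' - b')^2"
      using sum_sq_le_twice_sum_of_sq[of "2 * norm (a - b)" "2 * norm (a' - b')"]
      by (simp add: power_mult_distrib)
    finally show ?thesis .
  qed
  ultimately have "N^2 \<le> 31 / 32 * \<gamma>^2"
    by linarith
  then have "N \<le> sqrt (31 / 32 * \<gamma>^2)"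
    by (rule real_le_rsqrt)
  also have "\<dots> = sqrt (31 / 32) * \<gamma>"
    using assms(1) by (simp only: real_sqrt_mult real_sqrt_abs abs_of_nonneg)
  finally show ?thesis
    unfolding N_def .
qed

end
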